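(* Assume there are constants $0<\delta\le M$ with $-M\le\Delta(t)\le-\delta$ for all $t\in[0,T_1]$. Then for each $t\in[0,T_1]$ the map $z\mapsto\tilde w(t,z)$ is convex on $(0,\infty)$.
   Context: Setting: a filtered probability space with the usual conditions carrying a standard Brownian motion $B$; $0<T_1<T<\infty$; constants $r,\mu,\sigma,\rho,\mu_w,\sigma_w,\alpha,\beta>0$, $\kappa=(\mu-r)/\sigma$; $\xi(t)=\exp(-\kappa B(t)-(\kappa^2/2+r)t)$, $\xi^t(s)=\xi(s)/\xi(t)$; $\mathcal W^{t,w}(s)=w\exp((\mu_w-\sigma_w^2/2)(s-t)+\sigma_w(B(s)-B(t)))$; $\vartheta=-r+\mu_w-\kappa\sigma_w<0$; $q(s)=(e^{\vartheta(T_1-s)}-1)/\vartheta$; $p^T(s)=\int_s^T e^{(\alpha-\beta-r)(u-s)}du$, $\mu^T=1+\alpha p^T$; $Y^{t,y}(s)=ye^{\rho(s-t)}\xi^t(s)$. Power utilities: $\gamma>0,\gamma\neq1$, $K:[0,T]\to(0,\infty)$ smooth, $U_1(t,x)=x^{1-\gamma}/(1-\gamma)$, $U_2(t,x)=K(t)x^{1-\gamma}/(1-\gamma)$; $\tilde\gamma=(1-\gamma)/\gamma$; $\Delta(t)=(1-K(t)^{1/\gamma})/\tilde\gamma$. $\hat V_i(t,y)=\sup_{c>0}\{U_i(t,c)-y\mu^T(t)c\}$; $\tilde V(t,y)=\mathbb E\int_t^Te^{-\rho(u-t)}\hat V_2(u,Y^{t,y}(u))du$. Measure change: $\mathcal E(t)=\exp(-\frac12(\sigma_w-\kappa)^2t+(\sigma_w-\kappa)B(t))$,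 $d\tilde{\mathbb P}=\mathcal E(T_1)d\mathbb P$. For $z>0$, $Z^{t,z}(s)=z\,(Y^{t,1}(s))^{1/(1-\gamma)}(\mathcal W^{t,1}(s))^{\gamma/(1-\gamma)}$. Reduced problem $\tilde w(t,z)=\sup_{\tau}\tilde{\mathbb E}\big[\int_t^\tau e^{\vartheta(u-t)}\hat V_1(u,Z^{t,z}(u))du+e^{\vartheta(\tau-t)}(\tilde V(\tau,Z^{t,z}(\tau))-q(\tau))\big]$ over stopping times $t\le\tau\le T_1$. *)

theory Defs
  imports "HOL-Probability.Probability"
begin

text \<open>Time index is real; only nonnegative times matter. The filtration F is a family of
  sub-sg-algebras (as measures on the common space) of M.\<close>

definition usual_filtered_space :: "'a measure \<Rightarrow> (real \<Rightarrow> 'a measure) \<Rightarrow> bool" where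
  "usual_filtered_space M F \<longleftrightarrow>
     prob_space M \<and> filtration (space M) F \<and> (\<forall>s. sets (F s) \<subseteq> sets M) \<and>
     complete_measure M \<and> null_sets M \<subseteq> sets (F 0) \<and>
     (\<forall>t\<ge>0. sets (F t) = (\<Inter>s\<in>{t<..}. sets (F s)))"

definition brownian_motion :: "'a measure \<Rightarrow> (real \<Rightarrow> 'a measure) \<Rightarrow> (real \<Rightarrow> 'a \<Rightarrow> real) \<Rightarrow> bool" where
  "brownian_motion M F B \<longleftrightarrow>
     (\<forall>\<omega>\<in>space M. B 0 \<omega> = 0 \<and> continuous_on {0..} (\<lambda>s. B s \<omega>)) \<and>
     (\<forall>s\<ge>0. B s \<in> borel_measurable (F s)) \<and>
     (\<forall>s u. 0 \<le> s \<and> s < u \<longrightarrow>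
        distributed M lborel (\<lambda>\<omega>. B u \<omega> - B s \<omega>)
          (\<lambda>x. ennreal (normal_density 0 (sqrt (u - s)) x)) \<and>
        (\<forall>A\<in>sets (F s). \<forall>C\<in>sets borel.
           measure M (A \<inter> ((\<lambda>\<omega>. B u \<omega> - B s \<omega>) -` C \<inter> space M)) =
           measure M A * measure M ((\<lambda>\<omega>. B u \<omega> - B s \<omega>) -` C \<inter> space M)))"

definition smooth_on_interval :: "real set \<Rightarrow> (real \<Rightarrow> real) \<Rightarrow> bool" where
  "smooth_on_interval S f \<longleftrightarrow>
     (\<exists>D :: nat \<Rightarrow> real \<Rightarrow> real. D 0 = f \<and>
        (\<forall>n. \<forall>x\<in>S. (D n has_real_derivative D (Suc n) x) (at x within S)))"

definition kappa :: "real \<Rightarrow> real \<Rightarrow> real \<Rightarrow> real" where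
  "kappa r mu sg = (mu - r) / sg"

definition xi :: "real \<Rightarrow> real \<Rightarrow> (real \<Rightarrow> 'a \<Rightarrow> real) \<Rightarrow> real \<Rightarrow> 'a \<Rightarrow> real" where
  "xi r k B t \<omega> = exp (- k * B t \<omega> - (k\<^sup>2 / 2 + r) * t)"

definition Wproc :: "real \<Rightarrow> real \<Rightarrow> (real \<Rightarrow> 'a \<Rightarrow> real) \<Rightarrow> real \<Rightarrow> real \<Rightarrow> real \<Rightarrow> 'a \<Rightarrow> real" where
  "Wproc muw sigmaw B t w s \<omega> =
     w * exp ((muw - sigmaw\<^sup>2 / 2) * (s - t) + sigmaw * (B s \<omega> - B t \<omega>))"

definition vartheta :: "real \<Rightarrow> real \<Rightarrow> real \<Rightarrow> real \<Rightarrow> real" where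
  "vartheta r muw k sigmaw = - r + muw - k * sigmaw"

definition qfun :: "real \<Rightarrow> real \<Rightarrow> real \<Rightarrow> real" where
  "qfun th T1 s = (exp (th * (T1 - s)) - 1) / th"

definition pT :: "real \<Rightarrow> real \<Rightarrow> real \<Rightarrow> real \<Rightarrow> real \<Rightarrow> real" where
  "pT alpha beta r T s = integral {s..T} (\<lambda>u. exp ((alpha - beta - r) * (u - s)))"

definition muT :: "real \<Rightarrow> real \<Rightarrow> real \<Rightarrow> real \<Rightarrow> real \<Rightarrow> real" where
  "muT alpha beta r T s = 1 + alpha * pT alpha beta r T s"

definition Yproc :: "real \<Rightarrow> real \<Rightarrow> real \<Rightarrow> (real \<Rightarrow> 'a \<Rightarrow> real) \<Rightarrow> real \<Rightarrow> real \<Rightarrow> real \<Rightarrow> 'a \<Rightarrow> real" where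
  "Yproc rho r k B t y s \<omega> = y * exp (rho * (s - t)) * (xi r k B s \<omega> / xi r k B t \<omega>)"

definition U1 :: "real \<Rightarrow> real \<Rightarrow> real \<Rightarrow> real" where
  "U1 gamma t x = x powr (1 - gamma) / (1 - gamma)"

definition U2 :: "real \<Rightarrow> (real \<Rightarrow> real) \<Rightarrow> real \<Rightarrow> real \<Rightarrow> real" where
  "U2 gamma K t x = K t * x powr (1 - gamma) / (1 - gamma)"

definition gamma_tilde :: "real \<Rightarrow> real" where
  "gamma_tilde gamma = (1 - gamma) / gamma"

definition Delta :: "real \<Rightarrow> (real \<Rightarrow> real) \<Rightarrow> real \<Rightarrow> real" where
  "Delta gamma K t = (1 - K t powr (1 / gamma)) / gamma_tilde gamma"

definition Vhat :: "(real \<Rightarrow> real \<Rightarrow> real) \<Rightarrow> (real \<Rightarrow> real) \<Rightarrow> real \<Rightarrow> real \<Rightarrow> real" where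
  "Vhat U m t y = (SUP c\<in>{0<..}. U t c - y * m t * c)"

definition Vtilde :: "'a measure \<Rightarrow> (real \<Rightarrow> 'a \<Rightarrow> real) \<Rightarrow> real \<Rightarrow> real \<Rightarrow> real \<Rightarrow> real \<Rightarrow> real
    \<Rightarrow> real \<Rightarrow> real \<Rightarrow> (real \<Rightarrow> real) \<Rightarrow> real \<Rightarrow> real \<Rightarrow> real \<Rightarrow> real" where
  "Vtilde M B r mu sg rho alpha beta gamma K T t y =
     (\<integral>\<omega>. (LINT u:{t..T}|lborel.
         exp (- rho * (u - t)) *
         Vhat (U2 gamma K) (muT alpha beta r T) u
              (Yproc rho r (kappa r mu sg) B t y u \<omega>)) \<partial>M)"

definition calE :: "real \<Rightarrow> real \<Rightarrow> (real \<Rightarrow> 'a \<Rightarrow> real) \<Rightarrow> real \<Rightarrow> 'a \<Rightarrow> real" where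
  "calE sigmaw k B t \<omega> = exp (- (1/2) * (sigmaw - k)\<^sup>2 * t + (sigmaw - k) * B t \<omega>)"

definition Ptilde :: "'a measure \<Rightarrow> (real \<Rightarrow> 'a \<Rightarrow> real) \<Rightarrow> real \<Rightarrow> real \<Rightarrow> real \<Rightarrow> 'a measure" where
  "Ptilde M B sigmaw k T1 = density M (\<lambda>\<omega>. ennreal (calE sigmaw k B T1 \<omega>))"

definition Zproc :: "real \<Rightarrow> real \<Rightarrow> real \<Rightarrow> real \<Rightarrow> real \<Rightarrow> real \<Rightarrow> real \<Rightarrow> (real \<Rightarrow> 'a \<Rightarrow> real)
    \<Rightarrow> real \<Rightarrow> real \<Rightarrow> real \<Rightarrow> 'a \<Rightarrow> real" where
  "Zproc r mu sg rho muw sigmaw gamma B t z s \<omega> =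
     z * (Yproc rho r (kappa r mu sg) B t 1 s \<omega>) powr (1 / (1 - gamma))
       * (Wproc muw sigmaw B t 1 s \<omega>) powr (gamma / (1 - gamma))"

definition stopping_times_between :: "'a measure \<Rightarrow> (real \<Rightarrow> 'a measure) \<Rightarrow> real \<Rightarrow> real \<Rightarrow> ('a \<Rightarrow> real) set" where
  "stopping_times_between M F t T1 =
     {\<tau>. stopping_time F \<tau> \<and> (\<forall>\<omega>\<in>space M. t \<le> \<tau> \<omega> \<and> \<tau> \<omega> \<le> T1)}"

definition wtilde :: "'a measure \<Rightarrow> (real \<Rightarrow> 'a measure) \<Rightarrow> (real \<Rightarrow> 'a \<Rightarrow> real)
    \<Rightarrow> real \<Rightarrow> real \<Rightarrow> real \<Rightarrow> real \<Rightarrow> real \<Rightarrow> real \<Rightarrow> real \<Rightarrow> real \<Rightarrow> real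
    \<Rightarrow> (real \<Rightarrow> real) \<Rightarrow> real \<Rightarrow> real \<Rightarrow> real \<Rightarrow> real \<Rightarrow> real" where
  "wtilde M F B r mu sg rho muw sigmaw alpha beta gamma K T T1 t z =
     (let k = kappa r mu sg;
          th = vartheta r muw k sigmaw;
          Z = Zproc r mu sg rho muw sigmaw gamma B t z
      in SUP \<tau>\<in>stopping_times_between M F t T1.
           (\<integral>\<omega>. (LINT u:{t..\<tau> \<omega>}|lborel.
                     exp (th * (u - t)) * Vhat (U1 gamma) (muT alpha beta r T) u (Z u \<omega>))
                 + exp (th * (\<tau> \<omega> - t)) *
                   (Vtilde M B r mu sg rho alpha beta gamma K T (\<tau> \<omega>) (Z (\<tau> \<omega>) \<omega>)
                    - qfun th T1 (\<tau> \<omega>))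
             \<partial>Ptilde M B sigmaw k T1))"

end

theory Submission
  imports Defs
begin

text \<open>Both utilities are power functions, so their conjugates are homogeneous of degree
  \<open>\<eta> = (\<gamma> - 1)/\<gamma>\<close> in the dual variable, and so is \<open>Vtilde\<close>. Since \<open>Z\<^sup>t\<^sup>,\<^sup>z = z Z\<^sup>t\<^sup>,\<^sup>1\<close>,
  the expected payoff of each stopping time \<open>\<tau>\<close> takes the form \<open>z\<^sup>\<eta> a(\<tau>) + d(\<tau>)\<close>, where
  \<open>d(\<tau>)\<close> comes from the bounded term \<open>q\<close> and \<open>a(\<tau>)\<close> has the sign of \<open>1 - \<gamma>\<close>. Hence every
  \<open>z \<mapsto> z\<^sup>\<eta> a(\<tau>) + d(\<tau>)\<close> is convex (\<open>\<eta>(\<eta> - 1) = (1 - \<gamma>)/\<gamma>\<^sup>2\<close>), and so is their supremum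
  \<open>wtilde(t, \<cdot>)\<close>.\<close>

section \<open>Suprema of convex functions\<close>

lemma convex_on_cong:
  assumes "convex C" and "\<And>x. x \<in> C \<Longrightarrow> f x = g x"
  shows "convex_on C f \<longleftrightarrow> convex_on C g"
  using assms convexD[OF assms(1)] unfolding convex_on_def by auto

lemma convex_on_cSUP:
  fixes f :: "'b \<Rightarrow> 'a::real_vector \<Rightarrow> real"
  assumes "S \<noteq> {}" and "convex C" and convex: "\<And>i. i \<in> S \<Longrightarrow> convex_on C (f i)"
    and bdd: "\<And>x. x \<in> C \<Longrightarrow> bdd_above ((\<lambda>i. f i x) ` S)"
  shows "convex_on C (\<lambda>x. SUP i\<in>S. f i x)"
proof (rule convex_onI)
  fix u :: real and x y assume u: "0 < u" "u < 1" and x: "x \<in> C" and y: "y \<in> C"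
  show "(SUP i\<in>S. f i ((1 - u) *\<^sub>R x + u *\<^sub>R y))
      \<le> (1 - u) * (SUP i\<in>S. f i x) + u * (SUP i\<in>S. f i y)"
  proof (rule cSUP_least[OF \<open>S \<noteq> {}\<close>])
    fix i assume i: "i \<in> S"
    have "f i ((1 - u) *\<^sub>R x + u *\<^sub>R y) \<le> (1 - u) * f i x + u * f i y"
      using convex_onD[OF convex[OF i]] u x y by simp
    also have "\<dots> \<le> (1 - u) * (SUP i\<in>S. f i x) + u * (SUP i\<in>S. f i y)"
      using u i bdd[OF x] bdd[OF y] by (intro add_mono mult_left_mono cSUP_upper) auto
    finally show "f i ((1 - u) *\<^sub>R x + u *\<^sub>R y) \<le> \<dots>" .
  qed
qed (fact \<open>convex C\<close>)

text \<open>\<open>Sup\<close> on \<open>real\<close> is the least upper bound, so it takes one and the same junk value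
  on all sets without an upper bound.\<close>
lemma Sup_real_unbounded_eq:
  fixes X Y :: "real set"
  assumes "\<not> bdd_above X" "\<not> bdd_above Y"
  shows "Sup X = Sup Y"
proof -
  have "(\<lambda>z. \<forall>x\<in>X. x \<le> z) = (\<lambda>z. \<forall>x\<in>Y. x \<le> z)"
    using assms unfolding bdd_above_def by meson
  thus ?thesis by (simp add: Sup_real_def)
qed

lemma convex_on_powr_affine:
  fixes e a d :: real
  assumes "0 \<le> e * (e - 1) * a"
  shows "convex_on {0<..} (\<lambda>z. z powr e * a + d)"
proof (rule f''_ge0_imp_convex[where f' = "\<lambda>z. e * z powr (e - 1) * a"
      and f'' = "\<lambda>z. e * ((e - 1) * z powr (e - 1 - 1)) * a"])
  fix x :: real assume x: "x \<in> {0<..}"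
  show "((\<lambda>z. z powr e * a + d) has_real_derivative e * x powr (e - 1) * a) (at x)"
    and "((\<lambda>z. e * z powr (e - 1) * a) has_real_derivative e * ((e - 1) * x powr (e - 1 - 1)) * a) (at x)"
    using x by (auto intro!: derivative_eq_intros)
  have "0 \<le> (e * (e - 1) * a) * x powr (e - 1 - 1)" using assms by simp
  thus "0 \<le> e * ((e - 1) * x powr (e - 1 - 1)) * a" by (simp add: algebra_simps)
qed simp

lemma bdd_above_powr_family_transfer:
  fixes a d :: "'b \<Rightarrow> real"
  assumes z: "0 < z" and "0 < z'" and d: "\<And>i. i \<in> S \<Longrightarrow> \<bar>d i\<bar> \<le> C"
    and "bdd_above ((\<lambda>i. z powr e * a i + d i) ` S)"
  shows "bdd_above ((\<lambda>i. z' powr e * a i + d i) ` S)"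
proof -
  obtain b where b: "\<And>i. i \<in> S \<Longrightarrow> z powr e * a i + d i \<le> b"
    using assms(4) unfolding bdd_above_def by auto
  define q where "q = z' powr e / z powr e"
  have q: "0 < q" using z \<open>0 < z'\<close> by (simp add: q_def)
  have "z' powr e * a i + d i \<le> q * (b + C) + C" if i: "i \<in> S" for i
  proof -
    have "z' powr e * a i = q * (z powr e * a i)" using z by (simp add: q_def)
    also have "\<dots> \<le> q * (b + C)" using b[OF i] d[OF i] q by (intro mult_left_mono) auto
    finally show ?thesis using d[OF i] by linarith
  qed
  thus ?thesis by (intro bdd_aboveI) auto
qed

lemma convex_on_SUP_powr_family:
  fixes a d :: "'b \<Rightarrow> real"
  assumes S: "S \<noteq> {}" and a: "\<And>i. i \<in> S \<Longrightarrow> 0 \<le> e * (e - 1) * a i"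
    and d: "\<And>i. i \<in> S \<Longrightarrow> \<bar>d i\<bar> \<le> C"
  shows "convex_on {0<..} (\<lambda>z. SUP i\<in>S. z powr e * a i + d i)"
proof (cases "\<forall>z>0. bdd_above ((\<lambda>i. z powr e * a i + d i) ` S)")
  case True
  thus ?thesis using S a by (intro convex_on_cSUP convex_on_powr_affine) auto
next
  case False
  then obtain z0 where z0: "0 < z0" "\<not> bdd_above ((\<lambda>i. z0 powr e * a i + d i) ` S)"
    by auto
  have "\<not> bdd_above ((\<lambda>i. z powr e * a i + d i) ` S)" if "0 < z" for z
    using bdd_above_powr_family_transfer[where a=a and d=d and e=e and S=S, OF that \<open>0 < z0\<close> d] z0(2) by blast
  hence "(SUP i\<in>S. z powr e * a i + d i) = (SUP i\<in>S. z0 powr e * a i + d i)" if "0 < z" for z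
    using z0(2) that by (intro Sup_real_unbounded_eq)
  thus ?thesis by (subst convex_on_cong[of _ _ "\<lambda>_. SUP i\<in>S. z0 powr e * a i + d i"]) (auto simp: convex_on_const)
qed

lemma mult_integral_nonneg:
  fixes f :: "'a \<Rightarrow> real"
  assumes "\<And>x. x \<in> space M \<Longrightarrow> 0 \<le> c * f x"
  shows "0 \<le> c * integral\<^sup>L M f"
proof -
  have "0 \<le> (\<integral>x. c * f x \<partial>M)" using assms by (intro integral_nonneg_AE AE_I2)
  thus ?thesis by simp
qed

lemma mult_set_integral_nonneg:
  fixes f :: "'a \<Rightarrow> real"
  assumes "\<And>x. x \<in> A \<Longrightarrow> 0 \<le> c * f x"
  shows "0 \<le> c * (LINT x:A|M. f x)"
  unfolding set_lebesgue_integral_def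
  using assms by (intro mult_integral_nonneg) (auto simp: indicator_def)

text \<open>Without integrability of \<open>A\<close> both sides collapse to the junk value of the integral,
  which is \<open>0\<close>.\<close>
lemma integral_mult_add_integrable:
  fixes A D :: "'a \<Rightarrow> real"
  assumes D: "integrable N D" and c: "c \<noteq> 0"
  shows "(\<integral>\<omega>. c * A \<omega> + D \<omega> \<partial>N)
       = c * integral\<^sup>L N A + (if integrable N A then integral\<^sup>L N D else 0)"
proof (cases "integrable N A")
  case True
  thus ?thesis using D by simp
next
  case False
  have "\<not> integrable N (\<lambda>\<omega>. c * A \<omega> + D \<omega>)"
  proof
    assume "integrable N (\<lambda>\<omega>. c * A \<omega> + D \<omega>)"
    hence "integrable N (\<lambda>\<omega>. inverse c * ((c * A \<omega> + D \<omega>) - D \<omega>))"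
      using D by (intro integrable_mult_right Bochner_Integration.integrable_diff)
    moreover have "(\<lambda>\<omega>. inverse c * ((c * A \<omega> + D \<omega>) - D \<omega>)) = A" using c by (simp add: field_simps)
    ultimately show False using False by metis
  qed
  thus ?thesis using False by (simp add: not_integrable_integral_eq)
qed

lemma normal_density_mult_exp:
  fixes s c0 c1 x :: real
  assumes "0 < s"
  shows "normal_density 0 s x * exp (c0 + c1 * x)
       = exp (c0 + c1\<^sup>2 * s\<^sup>2 / 2) * normal_density (c1 * s\<^sup>2) s x"
proof -
  have "-(x - 0)\<^sup>2 / (2 * s\<^sup>2) + (c0 + c1 * x) = (c0 + c1\<^sup>2 * s\<^sup>2 / 2) + (-(x - c1 * s\<^sup>2)\<^sup>2 / (2 * s\<^sup>2))"
    using assms by (simp add: field_simps power2_eq_square)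
  hence "exp (-(x - 0)\<^sup>2 / (2 * s\<^sup>2)) * exp (c0 + c1 * x)
       = exp (c0 + c1\<^sup>2 * s\<^sup>2 / 2) * exp (-(x - c1 * s\<^sup>2)\<^sup>2 / (2 * s\<^sup>2))"
    by (simp flip: exp_add)
  thus ?thesis unfolding normal_density_def by (simp add: algebra_simps)
qed

text \<open>\<open>B(T\<^sub>1)\<close> is centred Gaussian, so the density \<open>calE(T\<^sub>1)\<close> has finite expectation.\<close>
lemma finite_measure_Ptilde:
  assumes BM: "brownian_motion M F B" and T1: "0 < T1"
  shows "finite_measure (Ptilde M B sw k T1)"
proof
  define X where "X = (\<lambda>\<omega>. B T1 \<omega> - B 0 \<omega>)"
  define c0 where "c0 = - (1/2) * (sw - k)\<^sup>2 * T1"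
  define c1 where "c1 = sw - k"
  define s where "s = sqrt T1"
  have s: "0 < s" using T1 by (simp add: s_def)
  have D: "distributed M lborel X (\<lambda>x. ennreal (normal_density 0 s x))"
    using BM T1 unfolding brownian_motion_def X_def s_def by fastforce
  have Xm: "X \<in> borel_measurable M"
    using distributed_measurable[OF D] by (simp add: measurable_lborel1)
  have E: "calE sw k B T1 \<omega> = exp (c0 + c1 * X \<omega>)" if "\<omega> \<in> space M" for \<omega>
    using BM that by (simp add: brownian_motion_def calE_def X_def c0_def c1_def)
  have "(\<lambda>\<omega>. ennreal (exp (c0 + c1 * X \<omega>))) \<in> borel_measurable M" using Xm by measurable
  hence Em: "(\<lambda>\<omega>. ennreal (calE sw k B T1 \<omega>)) \<in> borel_measurable M"
    by (rule measurable_cong[THEN iffD1, rotated]) (simp add: E)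
  have "emeasure (Ptilde M B sw k T1) (space (Ptilde M B sw k T1))
      = (\<integral>\<^sup>+ \<omega>. ennreal (exp (c0 + c1 * X \<omega>)) \<partial>M)"
    unfolding Ptilde_def by (simp add: emeasure_density Em E cong: nn_integral_cong)
  also have "\<dots> = (\<integral>\<^sup>+ x. ennreal (normal_density 0 s x) * ennreal (exp (c0 + c1 * x)) \<partial>lborel)"
    by (rule distributed_nn_integral[OF D, symmetric]) measurable
  also have "\<dots> = (\<integral>\<^sup>+ x. ennreal (exp (c0 + c1\<^sup>2 * s\<^sup>2 / 2)) * ennreal (normal_density (c1 * s\<^sup>2) s x) \<partial>lborel)"
    by (intro nn_integral_cong) (simp add: normal_density_mult_exp[OF s] flip: ennreal_mult)
  also have "\<dots> = ennreal (exp (c0 + c1\<^sup>2 * s\<^sup>2 / 2))"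
    using integrable_normal_density[of s "c1 * s\<^sup>2"] integral_normal_density[of s "c1 * s\<^sup>2"] s
    by (simp add: nn_integral_cmult nn_integral_eq_integral)
  finally show "emeasure (Ptilde M B sw k T1) (space (Ptilde M B sw k T1)) \<noteq> \<infinity>" by simp
qed

section \<open>The conjugate of a power utility\<close>

definition power_utility_conj :: "real \<Rightarrow> real \<Rightarrow> real \<Rightarrow> real" where
  "power_utility_conj g k a = (SUP c\<in>{0<..}. k * c powr (1 - g) / (1 - g) - a * c)"

lemma Vhat_U1: "Vhat (U1 g) m t y = power_utility_conj g 1 (y * m t)"
  unfolding Vhat_def U1_def power_utility_conj_def by simp

lemma Vhat_U2: "Vhat (U2 g K) m t y = power_utility_conj g (K t) (y * m t)"
  unfolding Vhat_def U2_def power_utility_conj_def by simp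

lemma bdd_above_power_utility_gain:
  fixes k a g :: real
  assumes k: "0 < k" and a: "0 < a" and g: "0 < g"
  shows "bdd_above ((\<lambda>c. k * c powr (1 - g) / (1 - g) - a * c) ` {0<..})"
proof (cases "g < 1")
  case True
  define N where "N = (k / (a * (1 - g))) powr (1 / g)"
  have N: "0 < N" using k a True by (simp add: N_def)
  have NG: "N powr g = k / (a * (1 - g))" using k a True g unfolding N_def by (simp add: powr_powr)
  have "k * c powr (1 - g) / (1 - g) - a * c \<le> k * N powr (1 - g) / (1 - g)" if c: "0 < c" for c
  proof (cases "c \<le> N")
    case True
    have "c powr (1 - g) \<le> N powr (1 - g)" using True c \<open>g < 1\<close> by (intro powr_mono2) auto
    hence "k * c powr (1 - g) / (1 - g) \<le> k * N powr (1 - g) / (1 - g)" using k \<open>g < 1\<close>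
      by (intro divide_right_mono mult_left_mono) auto
    thus ?thesis using a c by (smt (verit) mult_pos_pos)
  next
    case False
    have "N powr g \<le> c powr g" using False N g by (intro powr_mono2) auto
    hence cg: "k / (a * (1 - g)) \<le> c powr g" using NG by simp
    have "c powr (1 - g) = c / c powr g" using c by (simp add: powr_diff)
    also have "\<dots> \<le> c / (k / (a * (1 - g)))" using cg c k a \<open>g < 1\<close>
      by (intro divide_left_mono) auto
    finally have "k * c powr (1 - g) / (1 - g) \<le> a * c" using k \<open>g < 1\<close> by (simp add: field_simps)
    moreover have "0 \<le> k * N powr (1 - g) / (1 - g)" using k \<open>g < 1\<close> by simp
    ultimately show ?thesis by simp
  qed
  thus ?thesis by (auto intro!: bdd_aboveI)
next
  case False
  have "k * c powr (1 - g) / (1 - g) - a * c \<le> 0" if "0 < c" for c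
    using False k a that by (smt (verit) divide_nonneg_nonpos mult_pos_pos powr_gt_zero)
  thus ?thesis by (auto intro!: bdd_aboveI[of _ 0])
qed

text \<open>Substituting \<open>c = \<mu>\<^sup>1\<^sup>/\<^sup>g c'\<close> moves the factor \<open>\<mu>\<close> of the price out of the supremum.\<close>
lemma power_utility_gain_rescale:
  fixes k a g mu c :: real
  assumes mu: "0 < mu" and c: "0 < c" and g: "0 < g"
  shows "k * c powr (1 - g) / (1 - g) - (mu * a) * c
       = mu powr ((g - 1) / g) * (k * (mu powr (1 / g) * c) powr (1 - g) / (1 - g) - a * (mu powr (1 / g) * c))"
proof -
  have e1: "mu powr ((g - 1) / g) * (mu powr (1 / g)) powr (1 - g) = 1"
    using mu g by (simp add: powr_powr flip: powr_add) (simp add: field_simps)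
  have e2: "mu powr ((g - 1) / g) * mu powr (1 / g) = mu"
    using mu g by (simp flip: powr_add) (simp add: field_simps)
  have "(mu powr (1 / g) * c) powr (1 - g) = (mu powr (1 / g)) powr (1 - g) * c powr (1 - g)"
    using mu c by (simp add: powr_mult)
  hence "mu powr ((g - 1) / g) * (k * (mu powr (1 / g) * c) powr (1 - g) / (1 - g) - a * (mu powr (1 / g) * c))
      = (mu powr ((g - 1) / g) * (mu powr (1 / g)) powr (1 - g)) * (k * c powr (1 - g)) / (1 - g)
        - (mu powr ((g - 1) / g) * mu powr (1 / g)) * a * c"
    by (simp add: algebra_simps diff_divide_distrib)
  thus ?thesis using e1 e2 by simp
qed

lemma power_utility_conj_scale:
  fixes k a g mu :: real
  assumes k: "0 < k" and a: "0 < a" and g: "0 < g" and mu: "0 < mu"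
  shows "power_utility_conj g k (mu * a) = mu powr ((g - 1) / g) * power_utility_conj g k a"
proof -
  define h where "h c = k * c powr (1 - g) / (1 - g) - a * c" for c
  have onto: "(\<lambda>c. mu powr (1 / g) * c) ` {0<..} = {0<..}"
  proof safe
    fix x :: real assume "0 < x"
    thus "x \<in> (\<lambda>c. mu powr (1 / g) * c) ` {0<..}"
      using mu by (intro image_eqI[of _ _ "x / mu powr (1 / g)"]) auto
  qed (use mu in simp)
  have "power_utility_conj g k (mu * a) = (SUP c\<in>{0<..}. mu powr ((g - 1) / g) * h (mu powr (1 / g) * c))"
    unfolding power_utility_conj_def h_def using mu g
    by (intro SUP_cong refl) (simp add: power_utility_gain_rescale)
  also have "\<dots> = (SUP x\<in>{0<..}. mu powr ((g - 1) / g) * h x)"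
    by (subst (2) onto[symmetric]) (simp add: image_image)
  also have "\<dots> = mu powr ((g - 1) / g) * (SUP x\<in>{0<..}. h x)"
  proof -
    have "bdd_above (h ` {0<..})"
      using bdd_above_power_utility_gain[OF k a g] by (simp add: h_def)
    hence "mu powr ((g - 1) / g) * Sup (h ` {0<..}) = (SUP y\<in>h ` {0<..}. mu powr ((g - 1) / g) * y)"
      by (intro continuous_at_Sup_mono) (auto simp: mono_def intro!: mult_left_mono continuous_intros)
    thus ?thesis by (simp add: image_image)
  qed
  finally show ?thesis unfolding power_utility_conj_def h_def .
qed

lemma power_utility_conj_sign:
  fixes k a g :: real
  assumes k: "0 < k" and a: "0 < a" and g: "0 < g"
  shows "0 \<le> (1 - g) * power_utility_conj g k a"
proof (cases "g < 1")
  case True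
  have "0 \<le> power_utility_conj g k a"
  proof (rule field_le_epsilon)
    fix \<epsilon> :: real assume "0 < \<epsilon>"
    hence "k * (\<epsilon> / a) powr (1 - g) / (1 - g) - a * (\<epsilon> / a) \<le> power_utility_conj g k a"
      unfolding power_utility_conj_def using bdd_above_power_utility_gain[OF k a g] a
      by (intro cSUP_upper) auto
    moreover have "0 \<le> k * (\<epsilon> / a) powr (1 - g) / (1 - g)" using k True by simp
    ultimately show "0 \<le> power_utility_conj g k a + \<epsilon>" using a by simp
  qed
  thus ?thesis using True by simp
next
  case False
  have "power_utility_conj g k a \<le> 0"
    unfolding power_utility_conj_def
  proof (rule cSUP_least)
    fix c :: real assume "c \<in> {0<..}"
    thus "k * c powr (1 - g) / (1 - g) - a * c \<le> 0"
      using False k a by (smt (verit) divide_nonneg_nonpos greaterThan_iff mult_pos_pos powr_gt_zero)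
  qed simp
  thus ?thesis using False by (simp add: mult_nonpos_nonpos)
qed

section \<open>Homogeneity of the model quantities\<close>

lemma muT_pos:
  assumes "0 < alpha"
  shows "0 < muT alpha beta r T s"
proof -
  have "0 \<le> pT alpha beta r T s"
    unfolding pT_def
    by (cases "(\<lambda>u. exp ((alpha - beta - r) * (u - s))) integrable_on {s..T}")
       (auto intro!: integral_nonneg simp: not_integrable_integral)
  thus ?thesis using assms unfolding muT_def by (smt (verit) mult_nonneg_nonneg)
qed

lemma Yproc_pos: "0 < y \<Longrightarrow> 0 < Yproc rho r k B t y s \<omega>"
  by (simp add: Yproc_def xi_def)

lemma Yproc_scale: "Yproc rho r k B t (z * y) s \<omega> = z * Yproc rho r k B t y s \<omega>"
  by (simp add: Yproc_def)

lemma Zproc_pos: "0 < z \<Longrightarrow> 0 < Zproc r mu sg rho muw sigmaw gamma B t z s \<omega>"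
  unfolding Zproc_def Wproc_def using Yproc_pos[of 1 rho r "kappa r mu sg" B t s \<omega>] by simp

lemma Zproc_scale:
  "Zproc r mu sg rho muw sigmaw gamma B t z s \<omega> = z * Zproc r mu sg rho muw sigmaw gamma B t 1 s \<omega>"
  by (simp add: Zproc_def)

lemma Vtilde_scale:
  assumes g: "0 < g" and K: "\<forall>u\<in>{s..T}. 0 < K u" and alpha: "0 < alpha"
    and y: "0 < y" and z: "0 < z"
  shows "Vtilde M B r mu sg rho alpha beta g K T s (z * y)
       = z powr ((g - 1) / g) * Vtilde M B r mu sg rho alpha beta g K T s y"
proof -
  let ?Y = "\<lambda>u \<omega>. Yproc rho r (kappa r mu sg) B s y u \<omega>"
  let ?V = "\<lambda>y u. Vhat (U2 g K) (muT alpha beta r T) u y"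
  have V: "?V (z * ?Y u \<omega>) u = z powr ((g - 1) / g) * ?V (?Y u \<omega>) u" if "u \<in> {s..T}" for u \<omega>
    using K that power_utility_conj_scale[OF _ _ g z, of "K u" "?Y u \<omega> * muT alpha beta r T u"]
    by (simp add: Vhat_U2 mult.assoc Yproc_pos[OF y] muT_pos[OF alpha])
  have "(LINT u:{s..T}|lborel. exp (- rho * (u - s)) * ?V (z * ?Y u \<omega>) u)
      = z powr ((g - 1) / g) * (LINT u:{s..T}|lborel. exp (- rho * (u - s)) * ?V (?Y u \<omega>) u)" for \<omega>
    by (subst set_lebesgue_integral_cong[where g = "\<lambda>u. z powr ((g - 1) / g) * (exp (- rho * (u - s)) * ?V (?Y u \<omega>) u)"])
       (simp_all add: V)
  thus ?thesis unfolding Vtilde_def Yproc_scale by simp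
qed

lemma Vtilde_sign:
  assumes g: "0 < g" and K: "\<forall>u\<in>{s..T}. 0 < K u" and alpha: "0 < alpha" and y: "0 < y"
  shows "0 \<le> (1 - g) * Vtilde M B r mu sg rho alpha beta g K T s y"
  unfolding Vtilde_def
proof (intro mult_integral_nonneg mult_set_integral_nonneg)
  fix \<omega> u assume "u \<in> {s..T}"
  moreover have "0 < Yproc rho r (kappa r mu sg) B s y u \<omega> * muT alpha beta r T u"
    using Yproc_pos[OF y] muT_pos[OF alpha] by (intro mult_pos_pos)
  ultimately have "0 \<le> (1 - g) * Vhat (U2 g K) (muT alpha beta r T) u (Yproc rho r (kappa r mu sg) B s y u \<omega>)"
    using K by (simp add: Vhat_U2 power_utility_conj_sign[OF _ _ g])
  thus "0 \<le> (1 - g) * (exp (- rho * (u - s))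
          * Vhat (U2 g K) (muT alpha beta r T) u (Yproc rho r (kappa r mu sg) B s y u \<omega>))"
    by (subst mult.left_commute) simp
qed

lemma abs_discounted_qfun_le:
  assumes th: "th < 0" and s: "t \<le> s" "s \<le> T1"
  shows "\<bar>exp (th * (s - t)) * qfun th T1 s\<bar> \<le> 1 / \<bar>th\<bar>"
proof -
  have "exp (th * (s - t)) \<le> 1" "exp (th * (T1 - s)) \<le> 1"
    using th s by (simp_all add: mult_nonpos_nonneg)
  hence "exp (th * (s - t)) * \<bar>exp (th * (T1 - s)) - 1\<bar> \<le> 1 * 1"
    by (intro mult_mono) auto
  thus ?thesis unfolding qfun_def by (simp add: abs_mult abs_divide divide_right_mono)
qed

section \<open>The reduced stopping problem\<close>

locale reduced_stopping_problem =
  fixes M :: "'a measure" and F :: "real \<Rightarrow> 'a measure" and B :: "real \<Rightarrow> 'a \<Rightarrow> real"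
    and r mu sg rho muw sigmaw alpha beta gamma T T1 t :: real and K :: "real \<Rightarrow> real"
  assumes usual: "usual_filtered_space M F" and BM: "brownian_motion M F B"
    and T1_pos: "0 < T1" and alpha_pos: "0 < alpha"
    and vartheta_neg: "vartheta r muw (kappa r mu sg) sigmaw < 0"
    and gamma_pos: "0 < gamma"
    and K_pos: "\<forall>u\<in>{0..T}. 0 < K u"
    and t: "t \<in> {0..T1}"
begin

abbreviation "th \<equiv> vartheta r muw (kappa r mu sg) sigmaw"
abbreviation "P \<equiv> Ptilde M B sigmaw (kappa r mu sg) T1"
abbreviation "S \<equiv> stopping_times_between M F t T1"
abbreviation "eta \<equiv> (gamma - 1) / gamma"
abbreviation "Z \<equiv> Zproc r mu sg rho muw sigmaw gamma B t"

definition stopping_payoff :: "real \<Rightarrow> ('a \<Rightarrow> real) \<Rightarrow> 'a \<Rightarrow> real" where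
  "stopping_payoff z \<tau> \<omega> =
     (LINT u:{t..\<tau> \<omega>}|lborel. exp (th * (u - t)) * Vhat (U1 gamma) (muT alpha beta r T) u (Z z u \<omega>))
     + exp (th * (\<tau> \<omega> - t)) * (Vtilde M B r mu sg rho alpha beta gamma K T (\<tau> \<omega>) (Z z (\<tau> \<omega>) \<omega>)
                                 - qfun th T1 (\<tau> \<omega>))"

definition utility_gain :: "('a \<Rightarrow> real) \<Rightarrow> 'a \<Rightarrow> real" where
  "utility_gain \<tau> \<omega> =
     (LINT u:{t..\<tau> \<omega>}|lborel. exp (th * (u - t)) * Vhat (U1 gamma) (muT alpha beta r T) u (Z 1 u \<omega>))
     + exp (th * (\<tau> \<omega> - t)) * Vtilde M B r mu sg rho alpha beta gamma K T (\<tau> \<omega>) (Z 1 (\<tau> \<omega>) \<omega>)"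

definition terminal_penalty :: "('a \<Rightarrow> real) \<Rightarrow> 'a \<Rightarrow> real" where
  "terminal_penalty \<tau> \<omega> = - (exp (th * (\<tau> \<omega> - t)) * qfun th T1 (\<tau> \<omega>))"

definition utility_coeff :: "('a \<Rightarrow> real) \<Rightarrow> real" where
  "utility_coeff \<tau> = integral\<^sup>L P (utility_gain \<tau>)"

text \<open>The case split reproduces the junk value \<open>0\<close> of the expected payoff when
  \<open>utility_gain \<tau>\<close> is not integrable, cf. \<open>integral_mult_add_integrable\<close>.\<close>
definition penalty_coeff :: "('a \<Rightarrow> real) \<Rightarrow> real" where
  "penalty_coeff \<tau> = (if integrable P (utility_gain \<tau>) then integral\<^sup>L P (terminal_penalty \<tau>) else 0)"

lemma space_P: "space P = space M"
  by (simp add: Ptilde_def)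

lemma stopping_time_range: "\<tau> \<in> S \<Longrightarrow> \<omega> \<in> space M \<Longrightarrow> t \<le> \<tau> \<omega> \<and> \<tau> \<omega> \<le> T1"
  unfolding stopping_times_between_def by auto

lemma stopping_times_nonempty: "S \<noteq> {}"
  using t stopping_time_const[of F t] unfolding stopping_times_between_def by auto

lemma stopping_time_measurable:
  assumes "\<tau> \<in> S"
  shows "\<tau> \<in> borel_measurable P"
proof -
  have filt: "filtration (space M) F" and sub: "\<And>s. sets (F s) \<subseteq> sets M"
    using usual unfolding usual_filtered_space_def by auto
  have "\<tau> \<in> borel_measurable M"
    using assms sub filtration.space_F[OF filt]
    by (intro measurable_stopping_time[where F = F]) (auto simp: stopping_times_between_def)
  thus ?thesis by (simp add: Ptilde_def)
qed

lemma abs_terminal_penalty_le: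
  "\<tau> \<in> S \<Longrightarrow> \<omega> \<in> space M \<Longrightarrow> \<bar>terminal_penalty \<tau> \<omega>\<bar> \<le> 1 / \<bar>th\<bar>"
  unfolding terminal_penalty_def
  using abs_discounted_qfun_le[OF vartheta_neg] stopping_time_range by simp

lemma integrable_terminal_penalty:
  assumes \<tau>: "\<tau> \<in> S"
  shows "integrable P (terminal_penalty \<tau>)"
proof (rule finite_measure.integrable_const_bound[OF finite_measure_Ptilde[OF BM T1_pos]])
  show "AE x in P. norm (terminal_penalty \<tau> x) \<le> 1 / \<bar>th\<bar>"
    using abs_terminal_penalty_le[OF \<tau>] by (intro AE_I2) (simp add: space_P)
  have [measurable]: "\<tau> \<in> borel_measurable P" by (rule stopping_time_measurable[OF \<tau>])
  show "terminal_penalty \<tau> \<in> borel_measurable P"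
    unfolding terminal_penalty_def qfun_def by measurable
qed

lemma abs_penalty_coeff_le:
  assumes \<tau>: "\<tau> \<in> S"
  shows "\<bar>penalty_coeff \<tau>\<bar> \<le> measure P (space P) / \<bar>th\<bar>"
proof -
  have "\<bar>integral\<^sup>L P (terminal_penalty \<tau>)\<bar> \<le> (LINT \<omega>|P. \<bar>terminal_penalty \<tau> \<omega>\<bar>)"
    by (rule integral_abs_bound)
  also have "\<dots> \<le> (LINT _|P. 1 / \<bar>th\<bar>)"
    using abs_terminal_penalty_le[OF \<tau>] integrable_terminal_penalty[OF \<tau>]
      finite_measure.integrable_const[OF finite_measure_Ptilde[OF BM T1_pos]]
    by (intro integral_mono) (auto simp: space_P)
  finally show ?thesis unfolding penalty_coeff_def by auto
qed

lemma Z1_pos: "0 < Z 1 u \<omega>"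
  by (simp add: Zproc_pos)

lemma Vhat_U1_scale:
  assumes "0 < z" "0 < y"
  shows "Vhat (U1 gamma) (muT alpha beta r T) u (z * y) = z powr eta * Vhat (U1 gamma) (muT alpha beta r T) u y"
  using power_utility_conj_scale[OF _ _ gamma_pos \<open>0 < z\<close>, of 1 "y * muT alpha beta r T u"]
    assms muT_pos[OF alpha_pos]
  by (simp add: Vhat_U1 mult.assoc)

lemma stopping_payoff_eq:
  assumes z: "0 < z" and \<tau>: "\<tau> \<in> S" and \<omega>: "\<omega> \<in> space M"
  shows "stopping_payoff z \<tau> \<omega> = z powr eta * utility_gain \<tau> \<omega> + terminal_penalty \<tau> \<omega>"
proof -
  have "(LINT u:{t..\<tau> \<omega>}|lborel. exp (th * (u - t)) * Vhat (U1 gamma) (muT alpha beta r T) u (Z z u \<omega>))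
      = z powr eta * (LINT u:{t..\<tau> \<omega>}|lborel. exp (th * (u - t)) * Vhat (U1 gamma) (muT alpha beta r T) u (Z 1 u \<omega>))"
    using z by (simp add: Zproc_scale[where z = z] Vhat_U1_scale Z1_pos mult.left_commute)
  moreover have "Vtilde M B r mu sg rho alpha beta gamma K T (\<tau> \<omega>) (Z z (\<tau> \<omega>) \<omega>)
      = z powr eta * Vtilde M B r mu sg rho alpha beta gamma K T (\<tau> \<omega>) (Z 1 (\<tau> \<omega>) \<omega>)"
    using t K_pos stopping_time_range[OF \<tau> \<omega>] z Z1_pos
    by (subst Zproc_scale) (intro Vtilde_scale[OF gamma_pos _ alpha_pos]; auto)
  ultimately show ?thesis
    unfolding stopping_payoff_def utility_gain_def terminal_penalty_def by (simp add: algebra_simps)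
qed

lemma wtilde_eq_SUP:
  assumes z: "0 < z"
  shows "wtilde M F B r mu sg rho muw sigmaw alpha beta gamma K T T1 t z
       = (SUP \<tau>\<in>S. z powr eta * utility_coeff \<tau> + penalty_coeff \<tau>)"
proof -
  have "wtilde M F B r mu sg rho muw sigmaw alpha beta gamma K T T1 t z
      = (SUP \<tau>\<in>S. \<integral>\<omega>. stopping_payoff z \<tau> \<omega> \<partial>P)"
    unfolding wtilde_def Let_def stopping_payoff_def ..
  also have "\<dots> = (SUP \<tau>\<in>S. \<integral>\<omega>. z powr eta * utility_gain \<tau> \<omega> + terminal_penalty \<tau> \<omega> \<partial>P)"
    using z by (intro SUP_cong refl Bochner_Integration.integral_cong) (simp_all add: space_P stopping_payoff_eq)
  also have "\<dots> = (SUP \<tau>\<in>S. z powr eta * utility_coeff \<tau> + penalty_coeff \<tau>)"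
    unfolding utility_coeff_def penalty_coeff_def using z
    by (intro SUP_cong refl integral_mult_add_integrable integrable_terminal_penalty) auto
  finally show ?thesis .
qed

lemma utility_gain_sign:
  assumes \<tau>: "\<tau> \<in> S" and \<omega>: "\<omega> \<in> space M"
  shows "0 \<le> (1 - gamma) * utility_gain \<tau> \<omega>"
proof -
  have "0 \<le> (1 - gamma) * Vhat (U1 gamma) (muT alpha beta r T) u (Z 1 u \<omega>)" for u
    using power_utility_conj_sign[OF _ mult_pos_pos[OF Z1_pos muT_pos[OF alpha_pos]] gamma_pos]
    by (simp add: Vhat_U1)
  hence "0 \<le> (1 - gamma) * (LINT u:{t..\<tau> \<omega>}|lborel.
             exp (th * (u - t)) * Vhat (U1 gamma) (muT alpha beta r T) u (Z 1 u \<omega>))"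
    by (intro mult_set_integral_nonneg) (subst mult.left_commute, simp)
  moreover have "0 \<le> (1 - gamma) * Vtilde M B r mu sg rho alpha beta gamma K T (\<tau> \<omega>) (Z 1 (\<tau> \<omega>) \<omega>)"
    using t K_pos stopping_time_range[OF \<tau> \<omega>] Z1_pos
    by (intro Vtilde_sign[OF gamma_pos _ alpha_pos]) auto
  ultimately show ?thesis
    unfolding utility_gain_def distrib_left mult.left_commute[of "1 - gamma" "exp (th * (\<tau> \<omega> - t))"]
    by simp
qed

lemma utility_coeff_sign:
  assumes "\<tau> \<in> S"
  shows "0 \<le> eta * (eta - 1) * utility_coeff \<tau>"
proof -
  have "eta * (eta - 1) = (1 - gamma) / gamma\<^sup>2"
    using gamma_pos by (simp add: field_simps power2_eq_square)
  moreover have "0 \<le> (1 - gamma) * utility_coeff \<tau>"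
    unfolding utility_coeff_def using utility_gain_sign[OF assms]
    by (intro mult_integral_nonneg) (simp add: space_P)
  ultimately show ?thesis by simp
qed

lemma convex_wtilde:
  "convex_on {0<..} (\<lambda>z. wtilde M F B r mu sg rho muw sigmaw alpha beta gamma K T T1 t z)"
proof -
  have "convex_on {0<..} (\<lambda>z. SUP \<tau>\<in>S. z powr eta * utility_coeff \<tau> + penalty_coeff \<tau>)"
    using stopping_times_nonempty utility_coeff_sign abs_penalty_coeff_le
    by (rule convex_on_SUP_powr_family)
  thus ?thesis by (subst convex_on_cong) (auto simp: wtilde_eq_SUP)
qed

end

theorem mainTheorem10:
  fixes M :: "'a measure" and F :: "real \<Rightarrow> 'a measure" and B :: "real \<Rightarrow> 'a \<Rightarrow> real"
    and r mu sg rho muw sigmaw alpha beta gamma T T1 :: real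
    and K :: "real \<Rightarrow> real"
  assumes space: "usual_filtered_space M F"
    and BM: "brownian_motion M F B"
    and T1_pos: "0 < T1" and T1_lt: "T1 < T"
    and pos: "0 < r" "0 < mu" "0 < sg" "0 < rho" "0 < muw" "0 < sigmaw" "0 < alpha" "0 < beta"
    and vartheta_neg: "vartheta r muw (kappa r mu sg) sigmaw < 0"
    and gamma: "0 < gamma" "gamma \<noteq> 1"
    and K_pos: "\<forall>t\<in>{0..T}. 0 < K t"
    and K_smooth: "smooth_on_interval {0..T} K"
    and Delta_bounds: "\<exists>\<delta> Mb. 0 < \<delta> \<and> \<delta> \<le> Mb \<and>
                         (\<forall>t\<in>{0..T1}. - Mb \<le> Delta gamma K t \<and> Delta gamma K t \<le> - \<delta>)"
    and t: "t \<in> {0..T1}"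
  shows "convex_on {0<..}
           (\<lambda>z. wtilde M F B r mu sg rho muw sigmaw alpha beta gamma K T T1 t z)"
proof -
  interpret reduced_stopping_problem M F B r mu sg rho muw sigmaw alpha beta gamma T T1 t K
    using space BM T1_pos pos(7) vartheta_neg gamma(1) K_pos t by unfold_locales
  show ?thesis by (rule convex_wtilde)
qed

end
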